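(* For any two randomized policies $\boldsymbol\theta,\boldsymbol\theta'\in\boldsymbol\Theta$, $$J^{\boldsymbol\theta'}_{\mu,\sigma}-J^{\boldsymbol\theta}_{\mu,\sigma}=\sum_{i\in\mathcal S}\pi^{\boldsymbol\theta'}(i)\sum_{a\in\mathcal A}(\theta'_{i,a}-\theta_{i,a})\Big\{\sum_{j\in\mathcal S}p^a(i,j)g^{\boldsymbol\theta}(j)+r(i,a)-\beta r(i,a)^2+2\beta J^{\boldsymbol\theta}_\mu r(i,a)\Big\}+\beta\big(J^{\boldsymbol\theta'}_\mu-J^{\boldsymbol\theta}_\mu\big)^2 .$$
   Context: Let $\mathcal S=\{1,\dots,S\}$ be a finite state space and $\mathcal A$ a finite action set, with transition probabilities $p^a(i,j)\ge0$ ($\sum_j p^a(i,j)=1$) and rewards $r(i,a)\in\mathbb R$. Standing assumption: for every deterministic map $d:\mathcal S\to\mathcal A$, the matrix with entries $p^{d(i)}(i,j)$ is irreducible. The randomized policy space is $\boldsymbol\Theta=\{\boldsymbol\theta=(\theta_{i,a})_{i\in\mathcal S,a\in\mathcal A}:\theta_{i,a}\ge0,\ \sum_a\theta_{i,a}=1\ \forall i\}$, where $\theta_{i,a}$ is the probability of choosing action $a$ in state $i$. Under $\boldsymbol\theta$ the transition matrix is $P^{\boldsymbol\theta}(i,j)=\sum_a p^a(i,j)\theta_{i,a}$; it is irreducible (by the standing assumption) with unique stationary distribution $\boldsymbol\pi^{\boldsymbol\theta}$ having positive entries. The mean is $J^{\boldsymbol\theta}_\mu=\sum_i\pi^{\boldsymbol\theta}(i)\sum_a\theta_{i,a}r(i,a)$;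 for fixed $\beta>0$ the cost is $f^{\boldsymbol\theta}(i)=\sum_a\theta_{i,a}[r(i,a)-\beta(r(i,a)-J^{\boldsymbol\theta}_\mu)^2]$ and the mean-variance combined metric is $J^{\boldsymbol\theta}_{\mu,\sigma}=\sum_i\pi^{\boldsymbol\theta}(i)f^{\boldsymbol\theta}(i)$. The potential $\mathbf g^{\boldsymbol\theta}$ is any solution of $\mathbf g^{\boldsymbol\theta}=\mathbf f^{\boldsymbol\theta}-J^{\boldsymbol\theta}_{\mu,\sigma}\mathbf 1+P^{\boldsymbol\theta}\mathbf g^{\boldsymbol\theta}$ (unique up to adding a constant vector). *)

theory Defs
  imports Main "HOL-Library.Transitive_Closure_Table" Complex_Main
begin

text \<open>States: finite type 's; actions: finite type 'a.
  Transition kernel p a i j = p^a(i,j); rewards r i a.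
  Randomized policy theta i a = probability of action a in state i.\<close>

definition is_kernel :: "('a::finite \<Rightarrow> 's::finite \<Rightarrow> 's \<Rightarrow> real) \<Rightarrow> bool" where
  "is_kernel p \<longleftrightarrow> (\<forall>a i j. p a i j \<ge> 0) \<and> (\<forall>a i. (\<Sum>j\<in>UNIV. p a i j) = 1)"

definition irreducible_mat :: "('s::finite \<Rightarrow> 's \<Rightarrow> real) \<Rightarrow> bool" where
  "irreducible_mat P \<longleftrightarrow> (\<forall>i j. (i, j) \<in> {(x, y). P x y > 0}\<^sup>*)"

definition policies :: "('s::finite \<Rightarrow> 'a::finite \<Rightarrow> real) set" where
  "policies = {\<theta>. (\<forall>i a. \<theta> i a \<ge> 0) \<and> (\<forall>i. (\<Sum>a\<in>UNIV. \<theta> i a) = 1)}"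

definition Pmat :: "('a::finite \<Rightarrow> 's::finite \<Rightarrow> 's \<Rightarrow> real) \<Rightarrow> ('s \<Rightarrow> 'a \<Rightarrow> real) \<Rightarrow> 's \<Rightarrow> 's \<Rightarrow> real" where
  "Pmat p \<theta> i j = (\<Sum>a\<in>UNIV. p a i j * \<theta> i a)"

definition stationary :: "('s::finite \<Rightarrow> 's \<Rightarrow> real) \<Rightarrow> ('s \<Rightarrow> real) \<Rightarrow> bool" where
  "stationary P \<pi> \<longleftrightarrow> (\<forall>i. \<pi> i \<ge> 0) \<and> (\<Sum>i\<in>UNIV. \<pi> i) = 1 \<and>
     (\<forall>j. (\<Sum>i\<in>UNIV. \<pi> i * P i j) = \<pi> j)"

text \<open>The (unique, under irreducibility) stationary distribution.\<close>
definition stat_dist :: "('s::finite \<Rightarrow> 's \<Rightarrow> real) \<Rightarrow> 's \<Rightarrow> real" where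
  "stat_dist P = (THE \<pi>. stationary P \<pi>)"

definition pi_pol :: "('a::finite \<Rightarrow> 's::finite \<Rightarrow> 's \<Rightarrow> real) \<Rightarrow> ('s \<Rightarrow> 'a \<Rightarrow> real) \<Rightarrow> 's \<Rightarrow> real" where
  "pi_pol p \<theta> = stat_dist (Pmat p \<theta>)"

definition J_mu :: "('a::finite \<Rightarrow> 's::finite \<Rightarrow> 's \<Rightarrow> real) \<Rightarrow> ('s \<Rightarrow> 'a \<Rightarrow> real) \<Rightarrow> ('s \<Rightarrow> 'a \<Rightarrow> real) \<Rightarrow> real" where
  "J_mu p r \<theta> = (\<Sum>i\<in>UNIV. pi_pol p \<theta> i * (\<Sum>a\<in>UNIV. \<theta> i a * r i a))"

definition f_cost :: "real \<Rightarrow> ('a::finite \<Rightarrow> 's::finite \<Rightarrow> 's \<Rightarrow> real) \<Rightarrow> ('s \<Rightarrow> 'a \<Rightarrow> real) \<Rightarrow> ('s \<Rightarrow> 'a \<Rightarrow> real) \<Rightarrow> 's \<Rightarrow> real" where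
  "f_cost \<beta> p r \<theta> i = (\<Sum>a\<in>UNIV. \<theta> i a * (r i a - \<beta> * (r i a - J_mu p r \<theta>)\<^sup>2))"

definition J_mv :: "real \<Rightarrow> ('a::finite \<Rightarrow> 's::finite \<Rightarrow> 's \<Rightarrow> real) \<Rightarrow> ('s \<Rightarrow> 'a \<Rightarrow> real) \<Rightarrow> ('s \<Rightarrow> 'a \<Rightarrow> real) \<Rightarrow> real" where
  "J_mv \<beta> p r \<theta> = (\<Sum>i\<in>UNIV. pi_pol p \<theta> i * f_cost \<beta> p r \<theta> i)"

definition is_potential :: "real \<Rightarrow> ('a::finite \<Rightarrow> 's::finite \<Rightarrow> 's \<Rightarrow> real) \<Rightarrow> ('s \<Rightarrow> 'a \<Rightarrow> real) \<Rightarrow> ('s \<Rightarrow> 'a \<Rightarrow> real) \<Rightarrow> ('s \<Rightarrow> real) \<Rightarrow> bool" where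
  "is_potential \<beta> p r \<theta> g \<longleftrightarrow>
     (\<forall>i. g i = f_cost \<beta> p r \<theta> i - J_mv \<beta> p r \<theta> + (\<Sum>j\<in>UNIV. Pmat p \<theta> i j * g j))"

end

theory Submission
  imports Defs "HOL-Analysis.Analysis"
begin

text \<open>Write B(i,a) for the bracket, m(\<theta>) for the mean and J(\<theta>) for the mean-variance metric.
  Averaging B(i,-) over the actions of \<theta> and using the Poisson equation gives
  g(i) + J(\<theta>) + \<beta> m(\<theta>)^2. Averaging it over the actions of \<theta>' and then over \<pi>^\<theta>',
  stationarity turns the transition term into the \<pi>^\<theta>'-average of g, and the reward terms
  recombine into J(\<theta>') + \<beta> m(\<theta>')^2 + 2\<beta> (m(\<theta>) - m(\<theta>')) m(\<theta>'). In the difference the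
  g-terms cancel and the mean terms complete the square. The identity is algebraic in \<beta>.

  The probabilistic input is that \<pi>^\<theta>', a definite description, really is stationary.
  A stationary distribution exists for every stochastic matrix: v \<mapsto> vP - v maps into the
  sum-zero hyperplane, so it has a nonzero kernel vector v, and |v| is invariant as well.
  Under irreducibility it is unique: the positive part of an invariant vector is invariant,
  and its support is closed under transitions, hence empty or everything.\<close>

definition stochastic_mat :: "('s::finite \<Rightarrow> 's \<Rightarrow> real) \<Rightarrow> bool" where
  "stochastic_mat P \<longleftrightarrow> (\<forall>i j. 0 \<le> P i j) \<and> (\<forall>i. (\<Sum>j\<in>UNIV. P i j) = 1)"

lemma invariant_abs:
  assumes P: "stochastic_mat P" and v: "\<And>j. (\<Sum>i\<in>UNIV. v i * P i j) = v j"
  shows "(\<Sum>i\<in>UNIV. \<bar>v i\<bar> * P i j) = \<bar>v j\<bar>"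
proof -
  have nn: "\<And>i j. 0 \<le> P i j" and rs: "\<And>i. (\<Sum>j\<in>UNIV. P i j) = 1"
    using P unfolding stochastic_mat_def by auto
  have le: "\<bar>v k\<bar> \<le> (\<Sum>i\<in>UNIV. \<bar>v i\<bar> * P i k)" for k
  proof -
    have "\<bar>v k\<bar> = \<bar>\<Sum>i\<in>UNIV. v i * P i k\<bar>" using v by simp
    also have "\<dots> \<le> (\<Sum>i\<in>UNIV. \<bar>v i * P i k\<bar>)" by (rule sum_abs)
    also have "\<dots> = (\<Sum>i\<in>UNIV. \<bar>v i\<bar> * P i k)" using nn by (simp add: abs_mult)
    finally show ?thesis .
  qed
  have "(\<Sum>k\<in>UNIV. \<Sum>i\<in>UNIV. \<bar>v i\<bar> * P i k) = (\<Sum>i\<in>UNIV. \<bar>v i\<bar> * (\<Sum>k\<in>UNIV. P i k))"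
    unfolding sum_distrib_left by (rule sum.swap)
  also have "\<dots> = (\<Sum>k\<in>UNIV. \<bar>v k\<bar>)" using rs by simp
  finally have "(\<Sum>k\<in>UNIV. \<bar>v k\<bar>) = (\<Sum>k\<in>UNIV. \<Sum>i\<in>UNIV. \<bar>v i\<bar> * P i k)" by simp
  from sum_mono_inv[OF this, of j] le show ?thesis by simp
qed

lemma invariant_nonneg_pos_propagates:
  assumes nn: "\<And>i j. 0 \<le> P i j" and irr: "irreducible_mat P"
    and u0: "\<And>i. 0 \<le> u i" and u: "\<And>j. (\<Sum>i\<in>UNIV. u i * P i j) = u j"
    and ui: "0 < u i"
  shows "0 < u j"
proof -
  have "(i, j) \<in> {(x, y). P x y > 0}\<^sup>*" using irr unfolding irreducible_mat_def by blast
  then show ?thesis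
  proof (induction rule: rtrancl_induct)
    case base
    show ?case using ui .
  next
    case (step y z)
    then have "0 < u y * P y z" by simp
    also have "u y * P y z \<le> (\<Sum>k\<in>UNIV. u k * P k z)"
      by (rule member_le_sum) (use nn u0 in auto)
    also have "\<dots> = u z" using u by simp
    finally show ?case .
  qed
qed

lemma invariant_zero_sum_nonpos:
  assumes P: "stochastic_mat P" and irr: "irreducible_mat P"
    and v: "\<And>j. (\<Sum>i\<in>UNIV. v i * P i j) = v j" and v_sum: "(\<Sum>i\<in>UNIV. v i) = 0"
  shows "v j \<le> 0"
proof (rule ccontr)
  assume "\<not> v j \<le> 0"
  define u where "u i = (\<bar>v i\<bar> + v i) / 2" for i
  have "(\<Sum>i\<in>UNIV. u i * P i j) = u j" for j
    using v invariant_abs[OF P v, of j] unfolding u_def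
    by (simp add: add_divide_distrib sum_divide_distrib[symmetric] distrib_right sum.distrib)
  moreover have "0 \<le> u i" for i unfolding u_def by auto
  moreover have "0 < u j" using \<open>\<not> v j \<le> 0\<close> unfolding u_def by auto
  ultimately have u_pos: "0 < u k" for k
    using P irr invariant_nonneg_pos_propagates[of P u j k] unfolding stochastic_mat_def by blast
  have "0 < v k" for k using u_pos[of k] unfolding u_def by (cases "0 \<le> v k") auto
  then have "0 < (\<Sum>i\<in>UNIV. v i)" by (simp add: sum_pos)
  with v_sum show False by simp
qed

lemma stationary_unique:
  assumes P: "stochastic_mat P" and irr: "irreducible_mat P"
    and "stationary P \<pi>" and "stationary P \<sigma>"
  shows "\<pi> = \<sigma>"
proof -
  have le: "\<pi> j \<le> \<sigma> j" if "stationary P \<pi>" "stationary P \<sigma>" for \<pi> \<sigma> j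
  proof -
    have "\<pi> j - \<sigma> j \<le> 0"
      using that
      by (intro invariant_zero_sum_nonpos[OF P irr, of "\<lambda>i. \<pi> i - \<sigma> i"])
         (auto simp: stationary_def left_diff_distrib sum_subtractf)
    then show ?thesis by simp
  qed
  from le[OF assms(3,4)] le[OF assms(4,3)] show ?thesis by (intro ext antisym)
qed

lemma stationary_exists:
  fixes P :: "'s::finite \<Rightarrow> 's \<Rightarrow> real"
  assumes P: "stochastic_mat P"
  shows "\<exists>\<pi>. stationary P \<pi>"
proof -
  have rs: "\<And>i. (\<Sum>j\<in>UNIV. P i j) = 1" using P unfolding stochastic_mat_def by auto
  define L :: "real^'s \<Rightarrow> real^'s" where "L v = (\<chi> j. (\<Sum>i\<in>UNIV. v$i * P i j) - v$j)" for v
  have lin: "linear L"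
    unfolding L_def by (rule linearI) (auto simp: vec_eq_iff algebra_simps sum.distrib sum_distrib_left)
  have range_sum: "(\<Sum>j\<in>UNIV. L v $ j) = 0" for v
  proof -
    have "(\<Sum>j\<in>UNIV. \<Sum>i\<in>UNIV. v$i * P i j) = (\<Sum>i\<in>UNIV. v$i * (\<Sum>j\<in>UNIV. P i j))"
      unfolding sum_distrib_left by (rule sum.swap)
    then show ?thesis unfolding L_def using rs by (simp add: sum_subtractf)
  qed
  have "\<not> surj L"
  proof
    assume "surj L"
    then obtain v where "L v = (\<chi> j. 1)" by (metis surjD)
    with range_sum[of v] show False by simp
  qed
  then obtain v where v0: "v \<noteq> 0" and "L v = 0"
    using linear_injective_imp_surjective[OF lin] linear_injective_0[OF lin] by blast
  then have v: "(\<Sum>i\<in>UNIV. v$i * P i j) = v$j" for j unfolding L_def by (simp add: vec_eq_iff)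
  define s where "s = (\<Sum>i\<in>UNIV. \<bar>v$i\<bar>)"
  obtain k where "v$k \<noteq> 0" using v0 by (metis vec_eq_iff zero_index)
  then have "0 < s" unfolding s_def by (intro sum_pos2[where i=k]) auto
  moreover have "(\<Sum>i\<in>UNIV. \<bar>v$i\<bar> * P i j) = \<bar>v$j\<bar>" for j
    using invariant_abs[OF P, of "\<lambda>i. v$i"] v by blast
  ultimately have "stationary P (\<lambda>i. \<bar>v$i\<bar> / s)"
    by (auto simp: stationary_def sum_divide_distrib[symmetric] s_def)
  then show ?thesis by blast
qed

lemma stationary_stat_dist:
  assumes "stochastic_mat P" and "irreducible_mat P"
  shows "stationary P (stat_dist P)"
  unfolding stat_dist_def
  using stationary_exists[OF assms(1)] stationary_unique[OF assms] by (metis theI)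

lemma stationary_average_step:
  assumes "stationary P \<pi>"
  shows "(\<Sum>i\<in>UNIV. \<pi> i * (\<Sum>j\<in>UNIV. P i j * g j)) = (\<Sum>j\<in>UNIV. \<pi> j * g j)"
proof -
  have "(\<Sum>i\<in>UNIV. \<pi> i * (\<Sum>j\<in>UNIV. P i j * g j)) = (\<Sum>j\<in>UNIV. (\<Sum>i\<in>UNIV. \<pi> i * P i j) * g j)"
    unfolding sum_distrib_left sum_distrib_right by (subst sum.swap) (simp add: mult.assoc)
  with assms show ?thesis unfolding stationary_def by simp
qed

lemma policy_sum_eq_1: "\<theta> \<in> policies \<Longrightarrow> (\<Sum>a\<in>UNIV. \<theta> i a) = 1"
  unfolding policies_def by auto

lemma Pmat_stochastic:
  assumes "is_kernel p" and "\<theta> \<in> policies"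
  shows "stochastic_mat (Pmat p \<theta>)"
proof -
  have "(\<Sum>j\<in>UNIV. Pmat p \<theta> i j) = (\<Sum>a\<in>UNIV. \<theta> i a * (\<Sum>j\<in>UNIV. p a i j))" for i
    unfolding Pmat_def sum_distrib_left by (subst sum.swap) (simp add: mult.commute)
  with assms show ?thesis
    unfolding stochastic_mat_def is_kernel_def policies_def Pmat_def by (auto intro: sum_nonneg)
qed

text \<open>Row x of P^\<theta> dominates \<theta>(x, d x) > 0 times row x of the deterministic policy d choosing
  an action of positive \<theta>-probability, so P^\<theta> inherits the irreducibility of d.\<close>

lemma Pmat_irreducible:
  fixes \<theta> :: "'s::finite \<Rightarrow> 'a::finite \<Rightarrow> real"
  assumes kernel: "is_kernel p" and irred: "\<And>d :: 's \<Rightarrow> 'a. irreducible_mat (\<lambda>i j. p (d i) i j)"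
    and th: "\<theta> \<in> policies"
  shows "irreducible_mat (Pmat p \<theta>)"
proof -
  have pn: "\<And>a i j. 0 \<le> p a i j" using kernel unfolding is_kernel_def by auto
  have tn: "\<And>i a. 0 \<le> \<theta> i a" using th unfolding policies_def by auto
  have "\<exists>a. 0 < \<theta> i a" for i
    using policy_sum_eq_1[OF th, of i] tn by (metis less_eq_real_def sum.neutral zero_neq_one)
  then obtain d where d: "\<And>i. 0 < \<theta> i (d i)" by metis
  have "{(x, y). 0 < p (d x) x y} \<subseteq> {(x, y). 0 < Pmat p \<theta> x y}"
  proof clarify
    fix x y assume "0 < p (d x) x y"
    then have "0 < p (d x) x y * \<theta> x (d x)" using d by simp
    also have "\<dots> \<le> Pmat p \<theta> x y" unfolding Pmat_def
      by (rule member_le_sum[where f = "\<lambda>a. p a x y * \<theta> x a"]) (use pn tn in auto)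
    finally show "0 < Pmat p \<theta> x y" .
  qed
  with irred[of d] show ?thesis unfolding irreducible_mat_def by (meson rtrancl_mono subsetD)
qed

lemma stationary_pi_pol:
  fixes \<theta> :: "'s::finite \<Rightarrow> 'a::finite \<Rightarrow> real"
  assumes "is_kernel p" and "\<And>d :: 's \<Rightarrow> 'a. irreducible_mat (\<lambda>i j. p (d i) i j)"
    and "\<theta> \<in> policies"
  shows "stationary (Pmat p \<theta>) (pi_pol p \<theta>)"
  unfolding pi_pol_def using assms
  by (intro stationary_stat_dist Pmat_stochastic Pmat_irreducible)

lemma Pmat_apply:
  "(\<Sum>a\<in>UNIV. \<theta> i a * (\<Sum>j\<in>UNIV. p a i j * g j)) = (\<Sum>j\<in>UNIV. Pmat p \<theta> i j * g j)"
  unfolding Pmat_def sum_distrib_left sum_distrib_right by (subst sum.swap) (simp add: ac_simps)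

text \<open>The constant c is kept free: the theorem takes c = m(\<theta>) under both policies \<theta> and \<theta>'.\<close>

lemma action_average_bracket:
  assumes "\<theta> \<in> policies"
  shows "(\<Sum>a\<in>UNIV. \<theta> i a * ((\<Sum>j\<in>UNIV. p a i j * g j) + r i a - \<beta> * (r i a)\<^sup>2 + 2 * \<beta> * c * r i a))
    = (\<Sum>j\<in>UNIV. Pmat p \<theta> i j * g j) + f_cost \<beta> p r \<theta> i + \<beta> * (J_mu p r \<theta>)\<^sup>2
      + 2 * \<beta> * (c - J_mu p r \<theta>) * (\<Sum>a\<in>UNIV. \<theta> i a * r i a)"
proof -
  define J where "J = J_mu p r \<theta>"
  have "f_cost \<beta> p r \<theta> i = (\<Sum>a\<in>UNIV. \<theta> i a * (r i a - \<beta> * (r i a)\<^sup>2 + 2 * \<beta> * J * r i a)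
                                          - \<beta> * J\<^sup>2 * \<theta> i a)"
    unfolding f_cost_def J_def by (intro sum.cong) (auto simp: power2_eq_square algebra_simps)
  also have "\<dots> = (\<Sum>a\<in>UNIV. \<theta> i a * (r i a - \<beta> * (r i a)\<^sup>2 + 2 * \<beta> * J * r i a)) - \<beta> * J\<^sup>2"
    using policy_sum_eq_1[OF assms] by (simp add: sum_subtractf sum_distrib_left[symmetric])
  finally have f: "f_cost \<beta> p r \<theta> i = \<dots>" .
  have "(\<Sum>a\<in>UNIV. \<theta> i a * ((\<Sum>j\<in>UNIV. p a i j * g j) + r i a - \<beta> * (r i a)\<^sup>2 + 2 * \<beta> * c * r i a))
      = (\<Sum>a\<in>UNIV. \<theta> i a * (\<Sum>j\<in>UNIV. p a i j * g j)
           + \<theta> i a * (r i a - \<beta> * (r i a)\<^sup>2 + 2 * \<beta> * J * r i a)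
           + 2 * \<beta> * (c - J) * (\<theta> i a * r i a))"
    by (intro sum.cong) (auto simp: algebra_simps)
  also have "\<dots> = (\<Sum>j\<in>UNIV. Pmat p \<theta> i j * g j)
      + (\<Sum>a\<in>UNIV. \<theta> i a * (r i a - \<beta> * (r i a)\<^sup>2 + 2 * \<beta> * J * r i a))
      + 2 * \<beta> * (c - J) * (\<Sum>a\<in>UNIV. \<theta> i a * r i a)"
    by (simp only: sum.distrib Pmat_apply) (simp add: sum_distrib_left)
  finally show ?thesis unfolding f J_def by simp
qed

lemma potential_average_bracket:
  assumes th: "\<theta> \<in> policies" and pot: "is_potential \<beta> p r \<theta> g"
  shows "(\<Sum>a\<in>UNIV. \<theta> i a *
           ((\<Sum>j\<in>UNIV. p a i j * g j) + r i a - \<beta> * (r i a)\<^sup>2 + 2 * \<beta> * J_mu p r \<theta> * r i a))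
    = g i + J_mv \<beta> p r \<theta> + \<beta> * (J_mu p r \<theta>)\<^sup>2"
proof -
  have "g i = f_cost \<beta> p r \<theta> i - J_mv \<beta> p r \<theta> + (\<Sum>j\<in>UNIV. Pmat p \<theta> i j * g j)"
    using pot unfolding is_potential_def by blast
  then show ?thesis unfolding action_average_bracket[OF th] by simp
qed

lemma stationary_average_bracket:
  fixes \<theta> :: "'s::finite \<Rightarrow> 'a::finite \<Rightarrow> real"
  assumes kernel: "is_kernel p" and irred: "\<And>d :: 's \<Rightarrow> 'a. irreducible_mat (\<lambda>i j. p (d i) i j)"
    and th: "\<theta> \<in> policies"
  shows "(\<Sum>i\<in>UNIV. pi_pol p \<theta> i * (\<Sum>a\<in>UNIV. \<theta> i a *
           ((\<Sum>j\<in>UNIV. p a i j * g j) + r i a - \<beta> * (r i a)\<^sup>2 + 2 * \<beta> * c * r i a)))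
    = (\<Sum>i\<in>UNIV. pi_pol p \<theta> i * g i) + J_mv \<beta> p r \<theta> + \<beta> * (J_mu p r \<theta>)\<^sup>2
      + 2 * \<beta> * (c - J_mu p r \<theta>) * J_mu p r \<theta>"
proof -
  define \<pi> where "\<pi> = pi_pol p \<theta>"
  define K where "K = \<beta> * (J_mu p r \<theta>)\<^sup>2"
  define M where "M = 2 * \<beta> * (c - J_mu p r \<theta>)"
  have st: "stationary (Pmat p \<theta>) \<pi>" unfolding \<pi>_def by (rule stationary_pi_pol[OF kernel irred th])
  have "(\<Sum>i\<in>UNIV. \<pi> i * (\<Sum>a\<in>UNIV. \<theta> i a *
           ((\<Sum>j\<in>UNIV. p a i j * g j) + r i a - \<beta> * (r i a)\<^sup>2 + 2 * \<beta> * c * r i a)))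
    = (\<Sum>i\<in>UNIV. \<pi> i * (\<Sum>j\<in>UNIV. Pmat p \<theta> i j * g j) + \<pi> i * f_cost \<beta> p r \<theta> i
         + K * \<pi> i + M * (\<pi> i * (\<Sum>a\<in>UNIV. \<theta> i a * r i a)))"
    unfolding action_average_bracket[OF th] K_def M_def by (intro sum.cong) (auto simp: algebra_simps)
  also have "\<dots> = (\<Sum>i\<in>UNIV. \<pi> i * g i) + J_mv \<beta> p r \<theta> + K + M * J_mu p r \<theta>"
    using st stationary_average_step[OF st]
    by (simp add: sum.distrib sum_distrib_left[symmetric] stationary_def J_mv_def J_mu_def \<pi>_def)
  finally show ?thesis unfolding \<pi>_def K_def M_def .
qed

theorem mainTheorem7:
  fixes p :: "'a::finite \<Rightarrow> 's::finite \<Rightarrow> 's \<Rightarrow> real"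
    and r :: "'s \<Rightarrow> 'a \<Rightarrow> real"
    and \<beta> :: real
    and \<theta> \<theta>' :: "'s \<Rightarrow> 'a \<Rightarrow> real"
    and g :: "'s \<Rightarrow> real"
  assumes kernel: "is_kernel p"
    and irred: "\<And>d :: 's \<Rightarrow> 'a. irreducible_mat (\<lambda>i j. p (d i) i j)"
    and beta_pos: "\<beta> > 0"
    and th: "\<theta> \<in> policies"
    and th': "\<theta>' \<in> policies"
    and pot: "is_potential \<beta> p r \<theta> g"
  shows "J_mv \<beta> p r \<theta>' - J_mv \<beta> p r \<theta> =
    (\<Sum>i\<in>UNIV. pi_pol p \<theta>' i * (\<Sum>a\<in>UNIV. (\<theta>' i a - \<theta> i a) *
        ((\<Sum>j\<in>UNIV. p a i j * g j) + r i a - \<beta> * (r i a)\<^sup>2 + 2 * \<beta> * J_mu p r \<theta> * r i a)))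
    + \<beta> * (J_mu p r \<theta>' - J_mu p r \<theta>)\<^sup>2"
proof -
  define \<pi>' where "\<pi>' = pi_pol p \<theta>'"
  define Jm where "Jm = J_mu p r \<theta>"
  define Jm' where "Jm' = J_mu p r \<theta>'"
  define B where "B i a = (\<Sum>j\<in>UNIV. p a i j * g j) + r i a - \<beta> * (r i a)\<^sup>2 + 2 * \<beta> * Jm * r i a"
    for i a
  define C where "C = J_mv \<beta> p r \<theta> + \<beta> * Jm\<^sup>2"
  have avg: "(\<Sum>a\<in>UNIV. \<theta> i a * B i a) = g i + C" for i
    unfolding B_def C_def Jm_def potential_average_bracket[OF th pot] by simp
  have avg': "(\<Sum>i\<in>UNIV. \<pi>' i * (\<Sum>a\<in>UNIV. \<theta>' i a * B i a))
      = (\<Sum>i\<in>UNIV. \<pi>' i * g i) + J_mv \<beta> p r \<theta>' + \<beta> * Jm'\<^sup>2 + 2 * \<beta> * (Jm - Jm') * Jm'"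
    unfolding \<pi>'_def B_def Jm'_def by (rule stationary_average_bracket[OF kernel irred th'])
  have "(\<Sum>i\<in>UNIV. \<pi>' i) = 1"
    using stationary_pi_pol[OF kernel irred th'] unfolding stationary_def \<pi>'_def by blast
  then have avg_avg: "(\<Sum>i\<in>UNIV. \<pi>' i * (\<Sum>a\<in>UNIV. \<theta> i a * B i a)) = (\<Sum>i\<in>UNIV. \<pi>' i * g i) + C"
    unfolding avg by (simp add: distrib_left sum.distrib sum_distrib_right[symmetric])
  have "(\<Sum>i\<in>UNIV. \<pi>' i * (\<Sum>a\<in>UNIV. (\<theta>' i a - \<theta> i a) * B i a))
      = (\<Sum>i\<in>UNIV. \<pi>' i * (\<Sum>a\<in>UNIV. \<theta>' i a * B i a)) - (\<Sum>i\<in>UNIV. \<pi>' i * (\<Sum>a\<in>UNIV. \<theta> i a * B i a))"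
    by (simp add: left_diff_distrib right_diff_distrib sum_subtractf)
  also have "\<dots> = J_mv \<beta> p r \<theta>' - J_mv \<beta> p r \<theta> - \<beta> * (Jm' - Jm)\<^sup>2"
    unfolding avg' avg_avg C_def by (simp add: power2_eq_square algebra_simps)
  finally show ?thesis unfolding \<pi>'_def B_def Jm_def Jm'_def by simp
qed

end
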